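(* Let $T$ be a constant invertible complex $N\times N$ matrix with $T^\ast=T^\intercal=T^{-1}$. Let $C,K,L$ be constant complex $N\times N$ matrices with $K^\intercal=K$, and $V\in\mathbb{C}^N$, such that $C^\ast=TCT^{-1}$, $K^\ast=TKT^{-1}$, $L^\ast=TLT^{-1}$, $V^\ast=TV$. Write $\tilde\xi(\mathbf{t}_o,L)=\sum_{n\ge0}t_{2n+1}L^{2n+1}$ and $\tilde\xi'(\mathbf{t}_o,L)=\sum_{n\ge0}(2n+1)t_{2n+1}L^{2n}$ for real $\mathbf{t}_o=(t_1,t_3,t_5,\ldots)$. Then each of the following functions $\tau$ is real: (a) (case 1, CKP) if $L^\intercal K+KL=-VV^\intercal$ and $C^\intercal=C$: $\tau=\det\big(C-e^{\tilde\xi(\mathbf{t}_o,L^\intercal)}Ke^{\tilde\xi(\mathbf{t}_o,L)}\big)$; (b) (case 1, BKP) if $L^\intercal K+KL=-VV^\intercal$ and $C^\intercal=-C$: $\tau=\det\big(C-e^{\tilde\xi(\mathbf{t}_o,L^\intercal)}(L^\intercal K-KL)e^{\tilde\xi(\mathbf{t}_o,L)}\big)$; (c) (case 2, CKP) if $L^\intercal=-L$, $I_N+[L,K]=VV^\intercal$ and $C^\intercal=C$: $\tau=\det\big(e^{\tilde\xi(\mathbf{t}_o,L)}Ce^{-\tilde\xi(\mathbf{t}_o,L)}+\tilde\xi'(\mathbf{t}_o,L)-K\big)$; (d) (case 2, BKP) if $L^\intercal=-L$, $I_N+[L,K]=VV^\intercal$ and $C^\intercal=-C$: $\tau=\det\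big(e^{\tilde\xi(\mathbf{t}_o,L)}Ce^{-\tilde\xi(\mathbf{t}_o,L)}-(KL+LK)+2L\,\tilde\xi'(\mathbf{t}_o,L)\big)$.
   Context: $X^\ast$ denotes the entrywise complex conjugate of $X$ and $X^\intercal$ its transpose; $[L,K]=LK-KL$. These $\tau$-functions determine, via $\phi=(\ln\tau)_{t_1}$, solutions of the BKP and CKP hierarchies constructed from a matrix Riccati hierarchy. *)

theory Defs
  imports "HOL-Analysis.Analysis"
begin

type_synonym 'n cmat = "complex ^ 'n ^ 'n"

definition cnjm :: "'n::finite cmat \<Rightarrow> 'n cmat" where
  "cnjm A = (\<chi> i j. cnj (A $ i $ j))"

definition cnjv :: "complex ^ 'n::finite \<Rightarrow> complex ^ 'n" where
  "cnjv v = (\<chi> i. cnj (v $ i))"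

definition outer :: "complex ^ 'n::finite \<Rightarrow> 'n cmat" where
  "outer v = (\<chi> i j. v $ i * v $ j)"

primrec mpow :: "'n::finite cmat \<Rightarrow> nat \<Rightarrow> 'n cmat" where
  "mpow A 0 = mat 1"
| "mpow A (Suc k) = A ** mpow A k"

definition mexp :: "'n::finite cmat \<Rightarrow> 'n cmat" where
  "mexp A = (\<Sum>k. (1 / fact k :: real) *\<^sub>R mpow A k)"

text \<open>Odd times t_o = (t_1, t_3, t_5, ...) encoded as t n = t_{2n+1}; only
  the first M of them may be nonzero (finitely many times), so
  xi M t L = sum_{n<M} t_{2n+1} L^{2n+1}.\<close>
definition xi :: "nat \<Rightarrow> (nat \<Rightarrow> real) \<Rightarrow> 'n::finite cmat \<Rightarrow> 'n cmat" where
  "xi M t L = (\<Sum>n<M. t n *\<^sub>R mpow L (2*n+1))"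

definition xi' :: "nat \<Rightarrow> (nat \<Rightarrow> real) \<Rightarrow> 'n::finite cmat \<Rightarrow> 'n cmat" where
  "xi' M t L = (\<Sum>n<M. (real (2*n+1) * t n) *\<^sub>R mpow L (2*n))"

end

theory Submission
  imports Defs
begin

text \<open>
  Every matrix X whose determinant appears in the four \<open>\<tau>\<close>-functions satisfies
  \<open>X\<^sup>* = T X T\<^sup>-\<^sup>1\<close>: the property holds for \<open>C\<close>, \<open>K\<close>, \<open>L\<close> and \<open>L\<^sup>T\<close>
  (the latter because \<open>T\<^sup>T = T\<^sup>-\<^sup>1\<close>), and it is preserved by sums, real multiples and
  products, hence by the real-coefficient polynomials \<open>\<xi>\<close>, \<open>\<xi>'\<close> and, passing to the
  limit, by the exponential series. Then \<open>conj (det X) = det (T X T\<^sup>-\<^sup>1) = det X\<close>.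
  The constraints involving \<open>V\<close> and the (anti)symmetry of \<open>C\<close>, \<open>K\<close>, \<open>L\<close> are what make
  these \<open>\<tau>\<close>-functions solve the hierarchies; reality does not need them.
\<close>

definition matrix_l1_norm :: "'n::finite cmat \<Rightarrow> real" where
  "matrix_l1_norm A = (\<Sum>i\<in>UNIV. \<Sum>j\<in>UNIV. norm (A $ i $ j))"

lemma matrix_l1_norm_nonneg: "0 \<le> matrix_l1_norm A"
  unfolding matrix_l1_norm_def by (intro sum_nonneg) auto

lemma norm_le_matrix_l1_norm: "norm A \<le> matrix_l1_norm A"
proof -
  have "norm A \<le> (\<Sum>i\<in>UNIV. norm (A $ i))"
    unfolding norm_vec_def by (rule L2_set_le_sum) auto
  also have "\<dots> \<le> matrix_l1_norm A"
    unfolding matrix_l1_norm_def by (intro sum_mono) (simp add: norm_vec_def L2_set_le_sum)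
  finally show ?thesis .
qed

lemma matrix_l1_norm_mult: "matrix_l1_norm (A ** B) \<le> matrix_l1_norm A * matrix_l1_norm B"
proof -
  have row_le: "(\<Sum>j\<in>UNIV. norm (B $ k $ j)) \<le> matrix_l1_norm B" for k
    unfolding matrix_l1_norm_def
    by (rule member_le_sum[where f = "\<lambda>k. \<Sum>j\<in>UNIV. norm (B $ k $ j)"]) (auto intro: sum_nonneg)
  have "matrix_l1_norm (A ** B)
          \<le> (\<Sum>i\<in>UNIV. \<Sum>j\<in>UNIV. \<Sum>k\<in>UNIV. norm (A $ i $ k) * norm (B $ k $ j))"
    unfolding matrix_l1_norm_def matrix_matrix_mult_def
    by (intro sum_mono) (auto intro!: order_trans[OF norm_sum] simp: norm_mult)
  also have "\<dots> = (\<Sum>i\<in>UNIV. \<Sum>k\<in>UNIV. norm (A $ i $ k) * (\<Sum>j\<in>UNIV. norm (B $ k $ j)))"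
    by (subst sum.swap) (simp add: sum_distrib_left)
  also have "\<dots> \<le> (\<Sum>i\<in>UNIV. \<Sum>k\<in>UNIV. norm (A $ i $ k) * matrix_l1_norm B)"
    by (intro sum_mono mult_left_mono row_le) auto
  also have "\<dots> = matrix_l1_norm A * matrix_l1_norm B"
    by (simp add: matrix_l1_norm_def sum_distrib_right)
  finally show ?thesis .
qed

lemma matrix_l1_norm_mpow:
  "matrix_l1_norm (mpow A k) \<le> real CARD('n) * matrix_l1_norm (A :: 'n::finite cmat) ^ k"
proof (induction k)
  case 0
  have "matrix_l1_norm (mat 1 :: 'n cmat) = (\<Sum>i\<in>(UNIV::'n set). \<Sum>j\<in>UNIV. if i = j then 1 else 0)"
    unfolding matrix_l1_norm_def mat_def by (intro sum.cong) auto
  then show ?case by simp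
next
  case (Suc k)
  have "matrix_l1_norm (mpow A (Suc k)) \<le> matrix_l1_norm A * matrix_l1_norm (mpow A k)"
    by (simp add: matrix_l1_norm_mult)
  also have "\<dots> \<le> matrix_l1_norm A * (real CARD('n) * matrix_l1_norm A ^ k)"
    by (rule mult_left_mono[OF Suc matrix_l1_norm_nonneg])
  finally show ?case by (simp add: algebra_simps)
qed

lemma summable_mexp: "summable (\<lambda>k. (1 / fact k :: real) *\<^sub>R mpow (A :: 'n::finite cmat) k)"
proof (rule summable_norm_cancel, rule summable_comparison_test')
  show "summable (\<lambda>k. real CARD('n) * (inverse (fact k) * matrix_l1_norm A ^ k))"
    by (intro summable_mult summable_exp)
next
  fix k
  have "norm ((1 / fact k :: real) *\<^sub>R mpow A k) = (1 / fact k) * norm (mpow A k)"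
    by simp
  also have "\<dots> \<le> (1 / fact k) * (real CARD('n) * matrix_l1_norm A ^ k)"
    by (intro mult_left_mono order_trans[OF norm_le_matrix_l1_norm matrix_l1_norm_mpow]) auto
  finally
  show "norm (norm ((1 / fact k :: real) *\<^sub>R mpow A k))
               \<le> real CARD('n) * (inverse (fact k) * matrix_l1_norm A ^ k)"
    by (simp add: field_simps)
qed

lemma matrix_inv_right_left:
  fixes T :: "'a::semiring_1 ^ 'n ^ 'n"
  assumes "invertible T"
  shows "T ** matrix_inv T = mat 1" "matrix_inv T ** T = mat 1"
  using someI_ex[OF assms[unfolded invertible_def]] unfolding matrix_inv_def by auto

lemma matrix_add_rdistrib: "(A + B) ** C = A ** C + B ** (C :: 'a::semiring_1 ^ 'n ^ 'm)"
  by (simp add: matrix_matrix_mult_def vec_eq_iff algebra_simps sum.distrib)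

lemma cnjm_zero: "cnjm 0 = 0"
  by (simp add: cnjm_def vec_eq_iff)

lemma cnjm_mat_1: "cnjm (mat 1) = mat 1"
  by (simp add: cnjm_def vec_eq_iff mat_def)

lemma cnjm_add: "cnjm (A + B) = cnjm A + cnjm B"
  by (simp add: cnjm_def vec_eq_iff)

lemma cnjm_scaleR: "cnjm (r *\<^sub>R A) = r *\<^sub>R cnjm A"
  by (simp add: cnjm_def vec_eq_iff)

lemma cnjm_mult: "cnjm (A ** B) = cnjm A ** cnjm B"
  by (simp add: cnjm_def matrix_matrix_mult_def vec_eq_iff)

lemma cnjm_transpose: "cnjm (transpose A) = transpose (cnjm A)"
  by (simp add: cnjm_def vec_eq_iff transpose_def)

lemma det_cnjm: "det (cnjm A) = cnj (det A)"
  unfolding det_def cnjm_def by simp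

lemma bounded_linear_cnjm: "bounded_linear (cnjm :: 'n::finite cmat \<Rightarrow> 'n cmat)"
  by (rule linear_conv_bounded_linear[THEN iffD1], rule linearI) (simp_all add: cnjm_add cnjm_scaleR)

lemma bounded_linear_matrix_sandwich:
  "bounded_linear (\<lambda>X :: 'n::finite cmat. T ** X ** (S :: 'n cmat))"
  by (rule linear_conv_bounded_linear[THEN iffD1], rule linearI)
    (simp_all add: matrix_add_ldistrib matrix_add_rdistrib scalar_matrix_assoc matrix_scalar_ac)

locale cnj_similarity =
  fixes T S :: "'n::finite cmat"
  assumes T_S: "T ** S = mat 1" and S_T: "S ** T = mat 1"
begin

definition self_conj :: "'n cmat \<Rightarrow> bool" where
  "self_conj X \<longleftrightarrow> cnjm X = T ** X ** S"

lemma self_conj_zero: "self_conj 0"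
  by (simp add: self_conj_def cnjm_zero)

lemma self_conj_mat_1: "self_conj (mat 1)"
  by (simp add: self_conj_def cnjm_mat_1 T_S)

lemma self_conj_add: "self_conj A \<Longrightarrow> self_conj B \<Longrightarrow> self_conj (A + B)"
  by (simp add: self_conj_def cnjm_add matrix_add_ldistrib matrix_add_rdistrib)

lemma self_conj_scaleR: "self_conj A \<Longrightarrow> self_conj (r *\<^sub>R A)"
  by (simp add: self_conj_def cnjm_scaleR scalar_matrix_assoc matrix_scalar_ac)

lemma self_conj_uminus: "self_conj A \<Longrightarrow> self_conj (- A)"
  using self_conj_scaleR[of A "-1"] by simp

lemma self_conj_diff: "self_conj A \<Longrightarrow> self_conj B \<Longrightarrow> self_conj (A - B)"
  using self_conj_add[of A "- B"] self_conj_uminus[of B] by simp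

lemma self_conj_mult:
  assumes "self_conj A" "self_conj B"
  shows "self_conj (A ** B)"
proof -
  have "T ** (A ** B) ** S = (T ** A ** S) ** (T ** B ** S)"
    by (simp add: matrix_mul_assoc) (metis S_T matrix_mul_assoc matrix_mul_rid)
  with assms show ?thesis by (simp add: self_conj_def cnjm_mult)
qed

lemma self_conj_mpow: "self_conj A \<Longrightarrow> self_conj (mpow A k)"
  by (induction k) (simp_all add: self_conj_mat_1 self_conj_mult)

lemma self_conj_sum: "(\<And>i. i \<in> I \<Longrightarrow> self_conj (f i)) \<Longrightarrow> self_conj (\<Sum>i\<in>I. f i)"
  by (induction I rule: infinite_finite_induct) (simp_all add: self_conj_zero self_conj_add)

lemma self_conj_mexp:
  assumes "self_conj A"
  shows "self_conj (mexp A)"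
proof -
  let ?f = "\<lambda>k. (1 / fact k :: real) *\<^sub>R mpow A k"
  have sums: "?f sums mexp A"
    unfolding mexp_def by (rule summable_sums[OF summable_mexp])
  have "(\<lambda>k. cnjm (?f k)) sums cnjm (mexp A)"
    by (rule bounded_linear.sums[OF bounded_linear_cnjm sums])
  moreover have "(\<lambda>k. T ** ?f k ** S) sums (T ** mexp A ** S)"
    by (rule bounded_linear.sums[OF bounded_linear_matrix_sandwich sums])
  moreover have "(\<lambda>k. cnjm (?f k)) = (\<lambda>k. T ** ?f k ** S)"
    using self_conj_scaleR[OF self_conj_mpow[OF assms]] by (simp add: self_conj_def)
  ultimately show ?thesis
    unfolding self_conj_def using sums_unique2 by metis
qed

lemma self_conj_xi: "self_conj L \<Longrightarrow> self_conj (xi M t L)"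
  unfolding xi_def by (intro self_conj_sum self_conj_scaleR self_conj_mpow)

lemma self_conj_xi': "self_conj L \<Longrightarrow> self_conj (xi' M t L)"
  unfolding xi'_def by (intro self_conj_sum self_conj_scaleR self_conj_mpow)

lemma Im_det_self_conj:
  assumes "self_conj X"
  shows "Im (det X) = 0"
proof -
  have "cnj (det X) = det (T ** X ** S)"
    using assms by (simp add: self_conj_def det_cnjm[symmetric])
  also have "\<dots> = det X * det (T ** S)"
    by (simp add: det_mul)
  also have "\<dots> = det X"
    by (simp add: T_S)
  finally show ?thesis
    by (metis Reals_cnj_iff complex_is_Real_iff)
qed

end

theorem propositionC4:
  fixes T C K L :: "complex ^ 'n::finite ^ 'n"
    and V :: "complex ^ 'n"
  assumes hT_inv: "invertible T"
    and hT1: "cnjm T = transpose T"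
    and hT2: "transpose T = matrix_inv T"
    and hK: "transpose K = K"
    and hC: "cnjm C = T ** C ** matrix_inv T"
    and hKc: "cnjm K = T ** K ** matrix_inv T"
    and hL: "cnjm L = T ** L ** matrix_inv T"
    and hV: "cnjv V = T *v V"
  shows
    "(transpose L ** K + K ** L = - outer V \<and> transpose C = C \<longrightarrow>
       (\<forall>(M::nat) (t::nat \<Rightarrow> real).
          Im (det (C - mexp (xi M t (transpose L)) ** K ** mexp (xi M t L))) = 0))
   \<and> (transpose L ** K + K ** L = - outer V \<and> transpose C = - C \<longrightarrow>
       (\<forall>(M::nat) (t::nat \<Rightarrow> real).
          Im (det (C - mexp (xi M t (transpose L)) ** (transpose L ** K - K ** L)
                     ** mexp (xi M t L))) = 0))
   \<and> (transpose L = - L \<and> mat 1 + (L ** K - K ** L) = outer V \<and> transpose C = C \<longrightarrow>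
       (\<forall>(M::nat) (t::nat \<Rightarrow> real).
          Im (det (mexp (xi M t L) ** C ** mexp (- xi M t L) + xi' M t L - K)) = 0))
   \<and> (transpose L = - L \<and> mat 1 + (L ** K - K ** L) = outer V \<and> transpose C = - C \<longrightarrow>
       (\<forall>(M::nat) (t::nat \<Rightarrow> real).
          Im (det (mexp (xi M t L) ** C ** mexp (- xi M t L) - (K ** L + L ** K)
                   + (2::real) *\<^sub>R (L ** xi' M t L))) = 0))"
proof -
  interpret cnj_similarity T "matrix_inv T"
    using matrix_inv_right_left[OF hT_inv] by unfold_locales
  have C: "self_conj C" and K: "self_conj K" and L: "self_conj L"
    using hC hKc hL by (simp_all add: self_conj_def)
  have Lt: "self_conj (transpose L)"
    unfolding self_conj_def cnjm_transpose hL
    by (simp add: matrix_transpose_mul hT2[symmetric] matrix_mul_assoc)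
  show ?thesis
    by (intro conjI impI allI Im_det_self_conj self_conj_add self_conj_diff self_conj_uminus
        self_conj_scaleR self_conj_mult self_conj_mexp self_conj_xi self_conj_xi' C K L Lt)
qed

end
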